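(* Let $d \ge 1$ and let $S \subset \mathbb{R}^d$ be an arbitrary simplex with vertices $v_1, \dots, v_{d+1}$. For any real $t > 0$, any $y \in \mathbb{R}^d$ and any $R > \max_j |\langle v_j, y \rangle|$, \[ \hat{\chi}_{tS}(y) = \frac{(-1)^d d!}{(2\pi i)^{d+1}} \lambda(S) \int_{|z| = R} \frac{e^{-2\pi i z t}}{(z - \langle v_1, y\rangle) \cdots (z - \langle v_{d+1}, y \rangle)}\, dz, \] where the integral is a complex line integral along the positively oriented circle of radius $R$ centered at the origin.
   Context: $\lambda$ denotes Lebesgue measure on $\mathbb{R}^d$, $tS = \{tx : x \in S\}$, $\chi_{tS}$ is the characteristic function of $tS$, and $\hat{\chi}_{tS}(y) = \int_{tS} e^{-2\pi i \langle x, y \rangle}\, dx$. *)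

theory Defs
  imports "HOL-Analysis.Analysis" "HOL-Complex_Analysis.Complex_Analysis"
begin

definition fourier_char :: "(real^'n) set \<Rightarrow> real^'n \<Rightarrow> complex" where
  "fourier_char A y = integral A (\<lambda>x. exp (- (2 * of_real pi * \<i>) * of_real (x \<bullet> y)))"

end

theory Submission
  imports Defs
begin

text \<open>
  Both sides are power series in \<open>t\<close> whose coefficients are the complete homogeneous
  symmetric polynomials \<open>h\<^sub>k\<close> of the numbers \<open>w\<^sub>j = \<langle>v\<^sub>j, y\<rangle>\<close>, \<open>d = CARD('n)\<close>.
  On the left, expanding the exponential leaves the moments of \<open>\<langle>x, y\<rangle>\<close> over the simplex;
  writing \<open>S\<close> as an affine image of the standard simplex and integrating out one coordinate at a
  time (Beta integrals) gives \<open>\<integral>\<^sub>S \<langle>x, y\<rangle>\<^sup>m = d! \<lambda>(S) m! h\<^sub>m(w) / (m + d)!\<close>.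
  On the circle \<open>|z| = R\<close> the geometric series in \<open>w\<^sub>j / z\<close> gives
  \<open>1 / \<Prod>\<^sub>j (z - w\<^sub>j) = \<Sum>\<^sub>k h\<^sub>k(w) / z^(k + d + 1)\<close>, and Cauchy's formula for the
  derivatives of \<open>exp\<close> integrates the right-hand side term by term. The two series agree
  coefficientwise.
\<close>

section \<open>Complete homogeneous polynomials and a contour integral\<close>

fun complete_homogeneous :: "'a::comm_ring_1 list \<Rightarrow> nat \<Rightarrow> 'a" where
  "complete_homogeneous [] r = (if r = 0 then 1 else 0)"
| "complete_homogeneous (a # as) r = (\<Sum>b\<le>r. a ^ b * complete_homogeneous as (r - b))"

lemma complete_homogeneous_of_real:
  "complete_homogeneous (map of_real ws) r
     = (of_real (complete_homogeneous ws r) :: 'a::{real_algebra_1,comm_ring_1})"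
  by (induction ws arbitrary: r) (auto simp: of_real_sum of_real_mult of_real_power)

lemma complete_homogeneous_scale:
  "complete_homogeneous (map ((*) c) ws) r = c ^ r * complete_homogeneous ws r"
proof (induction ws arbitrary: r)
  case (Cons a ws)
  have "(c * a) ^ b * (c ^ (r - b) * complete_homogeneous ws (r - b))
      = c ^ r * (a ^ b * complete_homogeneous ws (r - b))" if "b \<le> r" for b
  proof -
    have "c ^ b * c ^ (r - b) = c ^ r" using that by (simp add: power_add[symmetric])
    then show ?thesis by (metis (no_types, lifting) mult.assoc mult.left_commute power_mult_distrib)
  qed
  then show ?case by (simp add: Cons sum_distrib_left)
qed simp

lemma complete_homogeneous_generating_function:
  fixes ws :: "'a::{real_normed_field,banach} list"
  assumes "\<forall>a\<in>set ws. norm (a * u) < 1"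
  shows "(\<lambda>k. complete_homogeneous ws k * u ^ k) sums (\<Prod>a\<leftarrow>ws. 1 / (1 - a * u))"
    and "summable (\<lambda>k. norm (complete_homogeneous ws k * u ^ k))"
proof -
  have "(\<lambda>k. complete_homogeneous ws k * u ^ k) sums (\<Prod>a\<leftarrow>ws. 1 / (1 - a * u))
      \<and> summable (\<lambda>k. norm (complete_homogeneous ws k * u ^ k))"
    using assms
  proof (induction ws)
    case Nil
    have "(\<lambda>k. complete_homogeneous ([]::'a list) k * u ^ k) = (\<lambda>k. if k = 0 then 1 else 0)"
      and "(\<lambda>k. norm (complete_homogeneous ([]::'a list) k * u ^ k)) = (\<lambda>k. if k = 0 then 1 else 0)"
      by auto
    then show ?case using sums_single[of 0 "\<lambda>_. (1::'a)"] by auto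
  next
    case (Cons a as)
    define A where "A = (\<lambda>k. (a * u) ^ k)"
    define B where "B = (\<lambda>k. complete_homogeneous as k * u ^ k)"
    have "norm (a * u) < 1" using Cons.prems by auto
    then have A: "A sums (1 / (1 - a * u))" "summable (\<lambda>k. norm (A k))"
      unfolding A_def by (auto simp: norm_power summable_geometric geometric_sums)
    have B: "B sums (\<Prod>a\<leftarrow>as. 1 / (1 - a * u))" "summable (\<lambda>k. norm (B k))"
      using Cons unfolding B_def by auto
    have Cauchy: "(\<Sum>i\<le>k. A i * B (k - i)) = complete_homogeneous (a # as) k * u ^ k" for k
    proof -
      have "A i * B (k - i) = a ^ i * complete_homogeneous as (k - i) * u ^ k" if "i \<le> k" for i
        using that unfolding A_def B_def
        by (simp add: power_mult_distrib power_add[symmetric] algebra_simps)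
      then show ?thesis by (simp add: sum_distrib_right)
    qed
    have "(\<lambda>k. \<Sum>i\<le>k. A i * B (k - i)) sums ((\<Sum>k. A k) * (\<Sum>k. B k))"
      by (rule Cauchy_product_sums[OF A(2) B(2)])
    then have "(\<lambda>k. complete_homogeneous (a # as) k * u ^ k) sums (\<Prod>a\<leftarrow>a # as. 1 / (1 - a * u))"
      using Cauchy A(1) B(1) by (simp add: sums_iff)
    moreover have "summable (\<lambda>k. norm (complete_homogeneous (a # as) k * u ^ k))"
    proof (rule summable_comparison_test)
      show "summable (\<lambda>k. \<Sum>i\<le>k. norm (A i) * norm (B (k - i)))"
        using summable_Cauchy_product[of "\<lambda>k. norm (A k)" "\<lambda>k. norm (B k)"] A(2) B(2) by simp
      show "\<exists>N. \<forall>k\<ge>N. norm (norm (complete_homogeneous (a # as) k * u ^ k))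
              \<le> (\<Sum>i\<le>k. norm (A i) * norm (B (k - i)))"
        unfolding Cauchy[symmetric] by (auto intro!: exI[of _ 0] order.trans[OF norm_sum] simp: norm_mult)
    qed
    ultimately show ?case by blast
  qed
  then show "(\<lambda>k. complete_homogeneous ws k * u ^ k) sums (\<Prod>a\<leftarrow>ws. 1 / (1 - a * u))"
    and "summable (\<lambda>k. norm (complete_homogeneous ws k * u ^ k))" by blast+
qed

lemma higher_deriv_exp_mult:
  "(deriv ^^ j) (\<lambda>z. exp (c * z)) = (\<lambda>z. c ^ j * exp (c * z :: complex))"
proof (induction j)
  case (Suc j)
  have "deriv (\<lambda>z. c ^ j * exp (c * z)) z = c ^ Suc j * exp (c * z)" for z
    by (rule DERIV_imp_deriv) (auto intro!: derivative_eq_intros simp: algebra_simps)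
  then show ?case by (simp add: Suc.IH fun_eq_iff)
qed simp

lemma has_contour_integral_exp_over_power:
  assumes "R > 0"
  shows "((\<lambda>z. exp (c * z) / z ^ Suc j) has_contour_integral (2 * pi * \<i> * c ^ j / fact j))
           (circlepath 0 R)"
proof -
  have "((\<lambda>z. exp (c * z) / (z - 0) ^ Suc j) has_contour_integral
          (2 * pi * \<i> / fact j * (deriv ^^ j) (\<lambda>z. exp (c * z)) 0)) (circlepath 0 R)"
    by (rule Cauchy_has_contour_integral_higher_derivative_circlepath)
       (auto intro!: continuous_intros holomorphic_intros simp: assms)
  then show ?thesis by (simp add: higher_deriv_exp_mult)
qed

lemma inverse_prod_list_diff:
  fixes z :: "'a::field"
  assumes "z \<noteq> 0"
  shows "1 / (\<Prod>a\<leftarrow>ws. z - a) = (1 / z) ^ length ws * (\<Prod>a\<leftarrow>ws. 1 / (1 - a * (1 / z)))"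
proof (induction ws)
  case (Cons a ws)
  have "1 / (z - a) = 1 / z * (1 / (1 - a * (1 / z)))"
    using assms by (cases "z = a") (simp_all add: field_simps)
  then have "1 / (\<Prod>a\<leftarrow>a # ws. z - a)
      = (1 / z * (1 / (1 - a * (1 / z)))) * ((1 / z) ^ length ws * (\<Prod>a\<leftarrow>ws. 1 / (1 - a * (1 / z))))"
    by (simp only: Cons[symmetric]) simp
  then show ?case by (simp only: list.size prod_list.Cons list.map power_Suc) (simp add: algebra_simps)
qed simp

lemma contour_integral_circlepath_sums:
  assumes R: "R > 0"
    and I: "\<And>k. (f k has_contour_integral I k) (circlepath 0 R)"
    and M: "\<And>k z. z \<in> sphere 0 R \<Longrightarrow> norm (f k z) \<le> M k" "summable M"
    and F: "\<And>z. z \<in> sphere 0 R \<Longrightarrow> (\<lambda>k. f k z) sums F z"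
  shows "I sums contour_integral (circlepath 0 R) F"
proof -
  have "uniform_limit (sphere 0 R) (\<lambda>N z. \<Sum>k<N. f k z) (\<lambda>z. \<Sum>k. f k z) sequentially"
    by (rule Weierstrass_m_test[OF M])
  moreover have "\<forall>\<^sub>F N in sequentially. (\<lambda>z. \<Sum>k<N. f k z) contour_integrable_on circlepath 0 R"
    using I by (intro always_eventually allI contour_integrable_sum) (auto simp: contour_integrable_on_def)
  ultimately have "(\<lambda>N. contour_integral (circlepath 0 R) (\<lambda>z. \<Sum>k<N. f k z))
      \<longlonglongrightarrow> contour_integral (circlepath 0 R) (\<lambda>z. \<Sum>k. f k z)"
    using R by (intro contour_integral_uniform_limit_circlepath(2)) auto
  moreover have "contour_integral (circlepath 0 R) (\<lambda>z. \<Sum>k<N. f k z) = (\<Sum>k<N. I k)" for N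
  proof -
    have "contour_integral (circlepath 0 R) (\<lambda>z. \<Sum>k<N. f k z)
        = (\<Sum>k<N. contour_integral (circlepath 0 R) (f k))"
      using I by (intro contour_integral_sum) (auto simp: contour_integrable_on_def)
    then show ?thesis by (simp add: contour_integral_unique[OF I])
  qed
  moreover have "contour_integral (circlepath 0 R) (\<lambda>z. \<Sum>k. f k z) = contour_integral (circlepath 0 R) F"
    using R F by (intro contour_integral_eq) (auto simp: sums_iff)
  ultimately show ?thesis by (simp add: sums_def)
qed

lemma contour_integral_exp_over_prod_sums:
  fixes ws :: "complex list"
  assumes len: "length ws = Suc n" and ws: "\<forall>a\<in>set ws. norm a < R"
  shows "(\<lambda>k. 2 * pi * \<i> * complete_homogeneous ws k * c ^ (k + n) / fact (k + n))
           sums contour_integral (circlepath 0 R) (\<lambda>z. exp (c * z) / (\<Prod>a\<leftarrow>ws. z - a))"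
proof -
  obtain a0 where "a0 \<in> set ws" using len by (cases ws) auto
  then have "norm a0 < R" using ws by blast
  then have R: "R > 0" using norm_ge_zero[of a0] by linarith
  define f where "f = (\<lambda>k z. complete_homogeneous ws k * (exp (c * z) / z ^ Suc (k + n)))"
  define M where "M = (\<lambda>k. exp (norm c * R) * (1 / R) ^ Suc n
                         * norm (complete_homogeneous ws k * of_real (1 / R) ^ k))"
  show ?thesis
  proof (rule contour_integral_circlepath_sums[OF R, where f = f and M = M])
    show "(f k has_contour_integral 2 * pi * \<i> * complete_homogeneous ws k * c ^ (k + n) / fact (k + n))
            (circlepath 0 R)" for k
      unfolding f_def using has_contour_integral_lmul[OF has_contour_integral_exp_over_power[OF R],
          of "complete_homogeneous ws k" c "k + n"]
      by (simp add: mult_ac)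
    have "\<forall>a\<in>set ws. norm (a * of_real (1 / R)) < 1"
      using ws R by (auto simp: norm_mult norm_divide field_simps)
    then show "summable M"
      unfolding M_def by (intro summable_mult complete_homogeneous_generating_function(2))
    fix z :: complex assume z: "z \<in> sphere 0 R"
    then have nz: "norm z = R" "z \<noteq> 0" using R by auto
    have "norm (exp (c * z)) \<le> exp (norm c * R)"
      using complex_Re_le_cmod[of "c * z"] nz by (simp add: norm_exp_eq_Re norm_mult)
    then have "norm (f k z) \<le> norm (complete_homogeneous ws k) * (exp (norm c * R) / R ^ Suc (k + n))" for k
      unfolding f_def using R
      by (auto simp: norm_mult norm_divide norm_power nz intro!: mult_left_mono divide_right_mono)
    then show "norm (f k z) \<le> M k" for k
      unfolding M_def using R by (simp add: norm_mult norm_power norm_divide field_simps power_add)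
    have small: "\<forall>a\<in>set ws. norm (a * (1 / z)) < 1"
      using ws nz by (auto simp: norm_mult norm_divide field_simps)
    have "exp (c * z) * (1 / z) ^ Suc n * (\<Prod>a\<leftarrow>ws. 1 / (1 - a * (1 / z)))
        = exp (c * z) / (\<Prod>a\<leftarrow>ws. z - a)"
      using inverse_prod_list_diff[OF nz(2), of ws] len
      by (metis mult.assoc times_divide_eq_right mult.right_neutral)
    moreover have "exp (c * z) * (1 / z) ^ Suc n * (complete_homogeneous ws k * (1 / z) ^ k) = f k z" for k
      unfolding f_def by (simp add: field_simps power_add)
    ultimately show "(\<lambda>k. f k z) sums (exp (c * z) / (\<Prod>a\<leftarrow>ws. z - a))"
      using sums_mult[OF complete_homogeneous_generating_function(1)[OF small],
          of "exp (c * z) * (1 / z) ^ Suc n"] by simp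
  qed
qed

section \<open>Moments of the standard simplex\<close>

lemma integral_power_beta:
  fixes L :: real
  assumes L: "L \<ge> 0"
  shows "(\<integral>y. indicator {0..L} y * ((L - y) ^ c * y ^ k) \<partial>lborel)
         = L ^ (c + k + 1) * fact c * fact k / fact (c + k + 1)"
  using L
proof (induction c arbitrary: k)
  case 0
  have "(\<integral>y. indicator {0..L} y * ((L - y) ^ 0 * y ^ k) \<partial>lborel) = (\<integral>y. y ^ k * indicator {0..L} y \<partial>lborel)"
    by (simp add: mult.commute)
  also have "\<dots> = L ^ Suc k / Suc k" using integral_power[OF 0] by simp
  also have "\<dots> = L ^ (0 + k + 1) * fact 0 * fact k / fact (0 + k + 1)"
    by (simp add: fact_Suc field_simps del: of_nat_Suc)
  finally show ?case .
next
  case (Suc c k)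
  have ibp: "(\<integral>y. indicator {0..L} y *\<^sub>R ((L - y) ^ Suc c * y ^ k) \<partial>lborel)
     = (L - L) ^ Suc c * (L ^ Suc k / Suc k) - (L - 0) ^ Suc c * (0 ^ Suc k / Suc k)
       - (\<integral>y. indicator {0..L} y *\<^sub>R ((- (Suc c * (L - y) ^ c)) * (y ^ Suc k / Suc k)) \<partial>lborel)"
  proof (rule integral_by_parts')
    show "DERIV (\<lambda>y. (L - y) ^ Suc c) y :> - (Suc c * (L - y) ^ c)" for y
    proof -
      have "DERIV (\<lambda>y. L - y) y :> -1" by (auto intro!: derivative_eq_intros)
      from DERIV_power_Suc[OF this, of c] show ?thesis by (simp add: algebra_simps)
    qed
    show "DERIV (\<lambda>y. y ^ Suc k / Suc k) y :> y ^ k" for y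
    proof -
      have "DERIV (\<lambda>y. y) y :> 1" by (auto intro!: derivative_eq_intros)
      from DERIV_power_Suc[OF this, of k] have "DERIV (\<lambda>y. y ^ Suc k) y :> Suc k * y ^ k"
        by (simp add: algebra_simps)
      from DERIV_cdivide[OF this, of "Suc k"] show ?thesis by (simp del: of_nat_Suc)
    qed
  qed (use Suc.prems in \<open>auto intro!: continuous_intros\<close>)
  have "(\<integral>y. indicator {0..L} y *\<^sub>R ((- (Suc c * (L - y) ^ c)) * (y ^ Suc k / Suc k)) \<partial>lborel)
       = (\<integral>y. (- (Suc c / Suc k)) * (indicator {0..L} y * ((L - y) ^ c * y ^ Suc k)) \<partial>lborel)"
    by (intro Bochner_Integration.integral_cong refl) (simp add: field_simps del: of_nat_Suc)
  also have "\<dots> = (- (Suc c / Suc k)) * (\<integral>y. indicator {0..L} y * ((L - y) ^ c * y ^ Suc k) \<partial>lborel)"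
    by (rule integral_mult_right_zero)
  also have "\<dots> = (- (Suc c / Suc k)) * (L ^ (c + Suc k + 1) * fact c * fact (Suc k) / fact (c + Suc k + 1))"
    by (simp only: Suc.IH[OF Suc.prems])
  finally have "(\<integral>y. indicator {0..L} y * ((L - y) ^ Suc c * y ^ k) \<partial>lborel)
      = (Suc c / Suc k) * (L ^ (c + Suc k + 1) * fact c * fact (Suc k) / fact (c + Suc k + 1))"
    using ibp by simp
  also have "\<dots> = L ^ (Suc c + k + 1) * fact (Suc c) * fact k / fact (Suc c + k + 1)"
    by (simp add: fact_Suc field_simps del: of_nat_Suc)
  finally show ?case .
qed

definition coord_simplex :: "'i set \<Rightarrow> ('i \<Rightarrow> real) set" where
  "coord_simplex J = {x. (\<forall>i\<in>J. 0 \<le> x i) \<and> sum x J \<le> 1}"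

lemma coord_simplex_sets:
  assumes "finite J"
  shows "coord_simplex J \<inter> space (Pi\<^sub>M J (\<lambda>_. lborel)) \<in> sets (Pi\<^sub>M J (\<lambda>_. lborel))"
proof -
  have "coord_simplex J \<inter> space (Pi\<^sub>M J (\<lambda>_. lborel)) =
          Pi\<^sub>E J (\<lambda>_. {0..}) \<inter> (\<lambda>x. sum x J) -` {..1} \<inter> space (Pi\<^sub>M J (\<lambda>_. lborel))"
    by (auto simp: coord_simplex_def space_PiM)
  also have "\<dots> \<in> sets (Pi\<^sub>M J (\<lambda>_. lborel))"
    using assms by measurable
  finally show ?thesis .
qed

lemma borel_measurable_indicator_coord_simplex [measurable]:
  "finite J \<Longrightarrow> (indicator (coord_simplex J) :: _ \<Rightarrow> real) \<in> borel_measurable (Pi\<^sub>M J (\<lambda>_. lborel))"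
  using coord_simplex_sets by (simp add: borel_measurable_indicator_iff)

lemma emeasure_coord_simplex_finite:
  "finite J \<Longrightarrow> emeasure (Pi\<^sub>M J (\<lambda>_. lborel)) (coord_simplex J \<inter> space (Pi\<^sub>M J (\<lambda>_. lborel))) < \<infinity>"
  using emeasure_std_simplex_aux[of J 1] by (simp add: coord_simplex_def)

lemma integrable_coord_simplex_bounded:
  fixes g :: "('i \<Rightarrow> real) \<Rightarrow> real"
  assumes fJ: "finite J" and g: "g \<in> borel_measurable (Pi\<^sub>M J (\<lambda>_. lborel))"
    and bnd: "\<And>x. x \<in> coord_simplex J \<Longrightarrow> \<bar>g x\<bar> \<le> B"
  shows "integrable (Pi\<^sub>M J (\<lambda>_. lborel)) (\<lambda>x. indicator (coord_simplex J) x * g x)"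
proof -
  let ?M = "Pi\<^sub>M J (\<lambda>_. lborel :: real measure)"
  have "integrable ?M (\<lambda>x. indicator (coord_simplex J \<inter> space ?M) x *\<^sub>R B)"
    using coord_simplex_sets[OF fJ] emeasure_coord_simplex_finite[OF fJ]
      by (intro integrable_indicator) auto
  then show ?thesis
  proof (rule Bochner_Integration.integrable_bound)
    show "(\<lambda>x. indicator (coord_simplex J) x * g x) \<in> borel_measurable ?M"
      using fJ g by measurable
    show "AE x in ?M. norm (indicator (coord_simplex J) x * g x)
                        \<le> norm (indicator (coord_simplex J \<inter> space ?M) x *\<^sub>R B)"
      using bnd by (intro AE_I2) (force simp: indicator_def)
  qed
qed

lemma coord_simplex_moment_bound:
  assumes "finite K" "x \<in> coord_simplex K"
  shows "\<bar>(1 - sum x K) ^ c * (\<Sum>i\<in>K. x i * \<omega> i) ^ r\<bar> \<le> (\<Sum>i\<in>K. \<bar>\<omega> i\<bar>) ^ r"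
proof -
  have x0: "\<And>i. i \<in> K \<Longrightarrow> 0 \<le> x i" and s1: "sum x K \<le> 1" using assms by (auto simp: coord_simplex_def)
  have s0: "0 \<le> sum x K" using x0 by (simp add: sum_nonneg)
  have x1: "x i \<le> 1" if "i \<in> K" for i
    using member_le_sum[of i K x] x0 that assms(1) s1 by auto
  have "\<bar>1 - sum x K\<bar> ^ c \<le> 1" using s0 s1 by (intro power_le_one) auto
  moreover have "\<bar>\<Sum>i\<in>K. x i * \<omega> i\<bar> \<le> (\<Sum>i\<in>K. \<bar>\<omega> i\<bar>)"
  proof -
    have "\<bar>\<Sum>i\<in>K. x i * \<omega> i\<bar> \<le> (\<Sum>i\<in>K. \<bar>x i * \<omega> i\<bar>)" by (rule sum_abs)
    also have "\<dots> \<le> (\<Sum>i\<in>K. \<bar>\<omega> i\<bar>)"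
    proof (intro sum_mono)
      fix i assume "i \<in> K"
      then have "\<bar>x i\<bar> \<le> 1" using x0 x1 by auto
      then show "\<bar>x i * \<omega> i\<bar> \<le> \<bar>\<omega> i\<bar>" by (simp add: abs_mult mult_left_le_one_le)
    qed
    finally show ?thesis .
  qed
  ultimately have "\<bar>1 - sum x K\<bar> ^ c * \<bar>\<Sum>i\<in>K. x i * \<omega> i\<bar> ^ r \<le> 1 * (\<Sum>i\<in>K. \<bar>\<omega> i\<bar>) ^ r"
    by (intro mult_mono power_mono) auto
  then show ?thesis by (simp add: abs_mult power_abs)
qed

lemma integral_power_beta_binomial:
  fixes L a q :: real
  assumes L: "L \<ge> 0"
  shows "(\<integral>y. indicator {0..L} y * ((L - y) ^ c * (y * a + q) ^ r) \<partial>lborel)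
       = (\<Sum>k\<le>r. of_nat (r choose k) * a ^ k * q ^ (r - k)
                   * (L ^ (c + k + 1) * fact c * fact k / fact (c + k + 1)))"
proof -
  define C where "C k = of_nat (r choose k) * a ^ k * q ^ (r - k)" for k
  have "indicator {0..L} y * ((L - y) ^ c * (y * a + q) ^ r)
      = (\<Sum>k\<le>r. C k * (indicator {0..L} y * ((L - y) ^ c * y ^ k)))" for y
    unfolding C_def
    by (subst binomial_ring) (simp add: sum_distrib_left sum_distrib_right power_mult_distrib algebra_simps)
  moreover have "integrable lborel (\<lambda>y. indicator {0..L} y * ((L - y) ^ c * y ^ k))" for k
    using borel_integrable_compact[OF compact_Icc, of 0 L "\<lambda>y. (L - y) ^ c * y ^ k"]
    by (simp add: continuous_intros)
  ultimately show ?thesis using integral_power_beta[OF L] by (simp add: integral_sum C_def)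
qed

lemma of_nat_choose_mult_fact:
  assumes "k \<le> n"
  shows "of_nat (n choose k) * fact k * fact (n - k) = (fact n :: 'a::{comm_semiring_1,semiring_char_0})"
proof -
  have "of_nat (fact k * fact (n - k) * (n choose k)) = (fact n :: 'a)"
    using binomial_fact_lemma[OF assms] by (simp only: of_nat_fact)
  then show ?thesis by (simp add: mult_ac)
qed

lemma binomial_times_beta:
  fixes x y D :: real
  assumes "k \<le> r"
  shows "of_nat (r choose k) * x * (fact c * fact k / fact (c + k + 1)) * (fact (c + k + 1) * fact (r - k) * y / D)
         = x * y * (fact c * fact r / D)"
proof -
  have cancel: "n * x * (a * b / F) * (F * e * y / D) = x * y * (a * (n * b * e) / D)"
    if "F \<noteq> 0" for n x a b e y D F :: real
    using that by (simp add: field_simps)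
  show ?thesis by (subst cancel) (simp_all add: of_nat_choose_mult_fact[OF assms])
qed

lemma integral_coord_simplex_insert_slice:
  fixes \<omega> :: "'i \<Rightarrow> real"
  assumes fJ: "finite J" and bJ: "b \<notin> J"
  shows "(\<integral>y. indicator (coord_simplex (insert b J)) (x(b := y))
             * ((1 - sum (x(b := y)) (insert b J)) ^ c * (\<Sum>i\<in>insert b J. (x(b := y)) i * \<omega> i) ^ r) \<partial>lborel)
       = (\<Sum>k\<le>r. of_nat (r choose k) * \<omega> b ^ k * (fact c * fact k / fact (c + k + 1))
             * (indicator (coord_simplex J) x * ((1 - sum x J) ^ (c + k + 1) * (\<Sum>i\<in>J. x i * \<omega> i) ^ (r - k))))"
proof -
  define Q where "Q = (\<Sum>i\<in>J. x i * \<omega> i)"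
  define L where "L = 1 - sum x J"
  have sum_upd: "sum (x(b := y)) (insert b J) = y + sum x J" for y
    using fJ bJ by (auto simp: sum.insert intro!: sum.cong)
  have inner_upd: "(\<Sum>i\<in>insert b J. (x(b := y)) i * \<omega> i) = y * \<omega> b + Q" for y
    using fJ bJ unfolding Q_def by (auto simp: sum.insert intro!: sum.cong)
  have "x(b := y) \<in> coord_simplex (insert b J) \<longleftrightarrow> x \<in> coord_simplex J \<and> y \<in> {0..L}" for y
    unfolding coord_simplex_def L_def using sum_upd[of y] bJ by (auto split: if_splits)
  then have slice: "indicator (coord_simplex (insert b J)) (x(b := y))
      = (indicator (coord_simplex J) x * indicator {0..L} y :: real)" for y
    by (simp add: indicator_def)
  show ?thesis
  proof (cases "x \<in> coord_simplex J")
    case False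
    then show ?thesis by (simp add: slice)
  next
    case True
    then have "L \<ge> 0" unfolding L_def coord_simplex_def by auto
    have "(\<integral>y. indicator (coord_simplex (insert b J)) (x(b := y))
             * ((1 - sum (x(b := y)) (insert b J)) ^ c * (\<Sum>i\<in>insert b J. (x(b := y)) i * \<omega> i) ^ r) \<partial>lborel)
        = (\<integral>y. indicator {0..L} y * ((L - y) ^ c * (y * \<omega> b + Q) ^ r) \<partial>lborel)"
      using True unfolding slice sum_upd inner_upd by (simp add: L_def algebra_simps)
    also have "\<dots> = (\<Sum>k\<le>r. of_nat (r choose k) * \<omega> b ^ k * (fact c * fact k / fact (c + k + 1))
                        * (L ^ (c + k + 1) * Q ^ (r - k)))"
      unfolding integral_power_beta_binomial[OF \<open>L \<ge> 0\<close>] by (simp add: mult_ac)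
    finally show ?thesis using True by (simp add: L_def Q_def)
  qed
qed

text \<open>
  A form of Dirichlet's integral. The factor \<open>(1 - \<Sum>x)\<^sup>c\<close> is what lets the induction over the
  coordinates go through.
\<close>

lemma integral_coord_simplex_moment:
  fixes \<omega> :: "'i \<Rightarrow> real"
  assumes "distinct bs"
  shows "(\<integral>x. indicator (coord_simplex (set bs)) x
             * ((1 - sum x (set bs)) ^ c * (\<Sum>i\<in>set bs. x i * \<omega> i) ^ r) \<partial>Pi\<^sub>M (set bs) (\<lambda>_. lborel))
         = fact c * fact r * complete_homogeneous (map \<omega> bs) r / fact (c + r + length bs)"
  using assms
proof (induction bs arbitrary: c r)
  case Nil
  have "(\<integral>x. indicator (coord_simplex {}) x * ((1 - sum x {}) ^ c * (\<Sum>i\<in>{}. x i * \<omega> i) ^ r)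
          \<partial>count_space {\<lambda>_. undefined})
      = (if r = 0 then 1 else 0)"
    by (simp add: lebesgue_integral_count_space_finite coord_simplex_def)
  then show ?case by (simp add: PiM_empty)
next
  case (Cons b bs)
  define J where "J = set bs"
  have bJ: "b \<notin> J" and fJ: "finite J" and dbs: "distinct bs" using Cons.prems by (auto simp: J_def)
  interpret product_sigma_finite "\<lambda>_::'i. lborel :: real measure" by standard
  define G where "G = (\<lambda>c r x. indicator (coord_simplex J) x * ((1 - sum x J) ^ c * (\<Sum>i\<in>J. x i * \<omega> i) ^ r))"
  define D :: real where "D = fact (c + r + length (b # bs))"
  have intF: "integrable (Pi\<^sub>M (insert b J) (\<lambda>_. lborel)) (\<lambda>x. indicator (coord_simplex (insert b J)) x
      * ((1 - sum x (insert b J)) ^ c * (\<Sum>i\<in>insert b J. x i * \<omega> i) ^ r))"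
    using fJ by (intro integrable_coord_simplex_bounded[where B="(\<Sum>i\<in>insert b J. \<bar>\<omega> i\<bar>) ^ r"]
        coord_simplex_moment_bound) (auto, measurable)
  have intG: "integrable (Pi\<^sub>M J (\<lambda>_. lborel)) (G c' r')" for c' r'
    unfolding G_def using fJ
    by (intro integrable_coord_simplex_bounded[where B="(\<Sum>i\<in>J. \<bar>\<omega> i\<bar>) ^ r'"] coord_simplex_moment_bound)
       (auto, measurable)
  have IH: "(\<integral>x. G (c + k + 1) (r - k) x \<partial>Pi\<^sub>M J (\<lambda>_. lborel))
      = fact (c + k + 1) * fact (r - k) * complete_homogeneous (map \<omega> bs) (r - k) / D" if "k \<le> r" for k
    using Cons.IH[OF dbs, of "c + k + 1" "r - k"] that unfolding G_def J_def D_def by simp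
  have "(\<integral>x. indicator (coord_simplex (insert b J)) x
            * ((1 - sum x (insert b J)) ^ c * (\<Sum>i\<in>insert b J. x i * \<omega> i) ^ r) \<partial>Pi\<^sub>M (insert b J) (\<lambda>_. lborel))
      = (\<integral>x. (\<Sum>k\<le>r. of_nat (r choose k) * \<omega> b ^ k * (fact c * fact k / fact (c + k + 1))
            * G (c + k + 1) (r - k) x) \<partial>Pi\<^sub>M J (\<lambda>_. lborel))"
    unfolding product_integral_insert[OF fJ bJ intF] G_def
    by (intro Bochner_Integration.integral_cong refl integral_coord_simplex_insert_slice fJ bJ)
  also have "\<dots> = (\<Sum>k\<le>r. of_nat (r choose k) * \<omega> b ^ k * (fact c * fact k / fact (c + k + 1))
            * (\<integral>x. G (c + k + 1) (r - k) x \<partial>Pi\<^sub>M J (\<lambda>_. lborel)))"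
    using intG by (simp add: integral_sum)
  also have "\<dots> = (\<Sum>k\<le>r. \<omega> b ^ k * complete_homogeneous (map \<omega> bs) (r - k)) * (fact c * fact r / D)"
    unfolding sum_distrib_right
    by (intro sum.cong refl) (simp only: atMost_iff IH binomial_times_beta)
  finally show ?case by (simp add: J_def D_def mult_ac)
qed

lemma integral_std_simplex_eq_coord_simplex:
  fixes h :: "'a::euclidean_space \<Rightarrow> real"
  assumes h: "continuous_on UNIV h"
  shows "(\<integral>x. indicator (convex hull (insert 0 Basis)) x * h x \<partial>lborel)
       = (\<integral>f. indicator (coord_simplex Basis) f * h (\<Sum>b\<in>Basis. f b *\<^sub>R b) \<partial>Pi\<^sub>M Basis (\<lambda>_. lborel))"
proof -
  define T where "T = (\<lambda>f::'a \<Rightarrow> real. \<Sum>b\<in>Basis. f b *\<^sub>R b)"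
  have "T f \<bullet> i = f i" if "i \<in> Basis" for f i
    unfolding T_def using that by (simp add: inner_sum_left inner_Basis if_distrib cong: if_cong)
  then have simplex: "T f \<in> convex hull (insert 0 Basis) \<longleftrightarrow> f \<in> coord_simplex Basis" for f
    unfolding std_simplex coord_simplex_def by (simp cong: ball_cong sum.cong)
  have "convex hull (insert 0 Basis) \<in> sets (borel :: 'a measure)"
    by (intro borel_closed compact_imp_closed finite_imp_compact_convex_hull) auto
  then have meas: "(\<lambda>x. indicator (convex hull (insert 0 Basis)) x * h x) \<in> borel_measurable borel"
    using h by (intro borel_measurable_times borel_measurable_indicator borel_measurable_continuous_onI)
  have T: "T \<in> measurable (Pi\<^sub>M Basis (\<lambda>_. lborel)) borel" unfolding T_def by measurable
  have "(\<integral>x. indicator (convex hull (insert 0 Basis)) x * h x \<partial>lborel)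
      = (\<integral>x. indicator (convex hull (insert 0 Basis)) x * h x \<partial>distr (Pi\<^sub>M Basis (\<lambda>_. lborel)) borel T)"
    unfolding T_def by (simp only: lborel_eq[symmetric])
  also have "\<dots> = (\<integral>f. indicator (convex hull (insert 0 Basis)) (T f) * h (T f) \<partial>Pi\<^sub>M Basis (\<lambda>_. lborel))"
    by (rule integral_distr[OF T meas])
  also have "\<dots> = (\<integral>f. indicator (coord_simplex Basis) f * h (T f) \<partial>Pi\<^sub>M Basis (\<lambda>_. lborel))"
    by (intro Bochner_Integration.integral_cong refl) (simp add: indicator_def simplex)
  finally show ?thesis unfolding T_def .
qed

lemma integral_std_simplex_moment:
  fixes \<omega> :: "'a::euclidean_space \<Rightarrow> real" and w0 :: real
  assumes dbs: "distinct bs" and sbs: "set bs = Basis"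
  shows "(\<integral>x. indicator (convex hull (insert 0 Basis)) x
              * (w0 + (\<Sum>b\<in>Basis. (x \<bullet> b) * (\<omega> b - w0))) ^ m \<partial>lborel)
         = fact m * complete_homogeneous (w0 # map \<omega> bs) m / fact (m + DIM('a))"
proof -
  define P where "P = Pi\<^sub>M Basis (\<lambda>_::'a. lborel :: real measure)"
  define G where "G = (\<lambda>c f. indicator (coord_simplex Basis) f
                           * ((1 - sum f Basis) ^ c * (\<Sum>b\<in>Basis. f b * \<omega> b) ^ (m - c)))"
  have len: "length bs = DIM('a)" using distinct_card[OF dbs] sbs by simp
  have "w0 + (\<Sum>b\<in>Basis. ((\<Sum>b'\<in>Basis. f b' *\<^sub>R b') \<bullet> b) * (\<omega> b - w0))
      = (1 - sum f Basis) * w0 + (\<Sum>b\<in>Basis. f b * \<omega> b)" for f :: "'a \<Rightarrow> real"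
    by (simp add: inner_sum_left inner_Basis if_distrib algebra_simps sum_subtractf sum_distrib_right
        sum_distrib_left cong: if_cong)
  moreover have cont: "continuous_on UNIV (\<lambda>x::'a. (w0 + (\<Sum>b\<in>Basis. (x \<bullet> b) * (\<omega> b - w0))) ^ m)"
    by (intro continuous_intros)
  ultimately have "(\<integral>x. indicator (convex hull (insert 0 Basis)) x
                * (w0 + (\<Sum>b\<in>Basis. (x \<bullet> b) * (\<omega> b - w0))) ^ m \<partial>lborel)
      = (\<integral>f. (\<Sum>c\<le>m. (of_nat (m choose c) * w0 ^ c) * G c f) \<partial>P)"
    unfolding integral_std_simplex_eq_coord_simplex[OF cont] G_def P_def
    by (intro Bochner_Integration.integral_cong refl)
      (simp only: binomial_ring sum_distrib_left power_mult_distrib ac_simps)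
  also have "\<dots> = (\<Sum>c\<le>m. (of_nat (m choose c) * w0 ^ c) * (\<integral>f. G c f \<partial>P))"
  proof (subst Bochner_Integration.integral_sum)
    show "integrable P (\<lambda>f. of_nat (m choose c) * w0 ^ c * G c f)" for c
      unfolding P_def G_def
      by (intro integrable_mult_right integrable_coord_simplex_bounded[where B="(\<Sum>i\<in>Basis. \<bar>\<omega> i\<bar>) ^ (m - c)"]
          coord_simplex_moment_bound) (auto, measurable)
  qed simp_all
  also have "\<dots> = (\<Sum>c\<le>m. w0 ^ c * complete_homogeneous (map \<omega> bs) (m - c)) * (fact m / fact (m + DIM('a)))"
    unfolding sum_distrib_right
  proof (intro sum.cong refl)
    fix c assume "c \<in> {..m}"
    then have cm: "c \<le> m" by simp
    have "(\<integral>f. G c f \<partial>P)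
        = fact c * fact (m - c) * complete_homogeneous (map \<omega> bs) (m - c) / fact (m + DIM('a))"
      using integral_coord_simplex_moment[OF dbs, where c = c and r = "m - c" and \<omega> = \<omega>] cm len
      unfolding sbs P_def G_def by simp
    moreover have "of_nat (m choose c) * fact c * fact (m - c) = (fact m :: real)"
      by (rule of_nat_choose_mult_fact[OF cm])
    ultimately show "(of_nat (m choose c) * w0 ^ c) * (\<integral>f. G c f \<partial>P)
        = w0 ^ c * complete_homogeneous (map \<omega> bs) (m - c) * (fact m / fact (m + DIM('a)))"
      by (simp add: mult_ac)
  qed
  also have "\<dots> = fact m * complete_homogeneous (w0 # map \<omega> bs) m / fact (m + DIM('a))"
    by simp
  finally show ?thesis .
qed

section \<open>Linear changes of variables\<close>

lemma integral_compact_eq_lborel: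
  fixes f :: "'a::euclidean_space \<Rightarrow> real"
  assumes "compact S" "continuous_on S f"
  shows "integral S f = (\<integral>x. indicator S x * f x \<partial>lborel)"
proof -
  have "set_integrable lborel S f"
    using borel_integrable_compact[OF assms] by (simp add: set_integrable_def)
  from set_borel_integral_eq_integral(2)[OF this] show ?thesis
    by (simp add: set_lebesgue_integral_def)
qed

lemma absolutely_integrable_on_compact:
  fixes h :: "'a::euclidean_space \<Rightarrow> 'b::euclidean_space"
  assumes "compact S" "continuous_on S h"
  shows "h absolutely_integrable_on S"
proof -
  have i: "integrable lborel (\<lambda>x. indicator S x *\<^sub>R h x)"
    by (rule borel_integrable_compact[OF assms])
  have "(\<lambda>x. indicator S x *\<^sub>R h x) \<in> borel_measurable lborel"
    using i by (rule borel_measurable_integrable)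
  then have "integrable lebesgue (\<lambda>x. indicator S x *\<^sub>R h x)"
    using i by (simp add: integrable_completion)
  then show ?thesis by (simp add: set_integrable_def)
qed

text \<open>
  The change-of-variables theorems of HOL-Analysis require a well-ordered index type. A finite
  type is copied to \<open>'a ranked\<close>, ordered by \<open>to_nat\<close>, and \<open>real^'a\<close> is transported along the copy.
\<close>

typedef 'a ranked = "UNIV :: 'a set" by auto

instance ranked :: (finite) finite
proof
  have "(UNIV :: 'a ranked set) = Abs_ranked ` UNIV" by (metis Abs_ranked_cases surj_def)
  then show "finite (UNIV :: 'a ranked set)" by (metis finite finite_imageI)
qed

instantiation ranked :: (finite) linorder
begin
definition less_eq_ranked :: "'a ranked \<Rightarrow> 'a ranked \<Rightarrow> bool" where
  "less_eq_ranked x y \<longleftrightarrow> to_nat (Rep_ranked x) \<le> to_nat (Rep_ranked y)"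
definition less_ranked :: "'a ranked \<Rightarrow> 'a ranked \<Rightarrow> bool" where
  "less_ranked x y \<longleftrightarrow> to_nat (Rep_ranked x) < to_nat (Rep_ranked y)"
instance
proof
  fix x y z :: "'a ranked"
  show "(x < y) = (x \<le> y \<and> \<not> y \<le> x)" unfolding less_eq_ranked_def less_ranked_def by auto
  show "x \<le> x" unfolding less_eq_ranked_def by auto
  show "x \<le> y \<Longrightarrow> y \<le> z \<Longrightarrow> x \<le> z" unfolding less_eq_ranked_def by auto
  show "x \<le> y \<Longrightarrow> y \<le> x \<Longrightarrow> x = y" unfolding less_eq_ranked_def
    by (metis Rep_ranked_inject antisym to_nat_split)
  show "x \<le> y \<or> y \<le> x" unfolding less_eq_ranked_def by auto
qed
end

instance ranked :: (finite) wellorder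
proof
  fix P :: "'a ranked \<Rightarrow> bool" and a :: "'a ranked"
  assume H: "\<And>x. (\<And>y. y < x \<Longrightarrow> P y) \<Longrightarrow> P x"
  show "P a"
  proof (induction a rule: measure_induct_rule[where f="\<lambda>x. to_nat (Rep_ranked x)"])
    case (less x)
    then show ?case using H unfolding less_ranked_def by blast
  qed
qed

definition to_ranked :: "real^'n \<Rightarrow> real^('n ranked)" where
  "to_ranked x = (\<chi> i. x $ Rep_ranked i)"
definition of_ranked :: "real^('n ranked) \<Rightarrow> real^'n" where
  "of_ranked y = (\<chi> j. y $ Abs_ranked j)"

lemma of_to_ranked [simp]: "of_ranked (to_ranked x) = x"
  unfolding to_ranked_def of_ranked_def by (auto simp: vec_eq_iff Rep_ranked_inverse Abs_ranked_inverse)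

lemma linear_to_ranked: "linear to_ranked" and linear_of_ranked: "linear of_ranked"
  unfolding to_ranked_def of_ranked_def by (auto intro!: linearI simp: vec_eq_iff)

lemma prod_Basis_vec: "(\<Prod>b\<in>Basis. (x::real^'m) \<bullet> b) = (\<Prod>i\<in>UNIV. x $ i)"
proof -
  have B: "(Basis :: (real^'m) set) = (\<lambda>i. axis i 1) ` UNIV"
    unfolding Basis_vec_def by auto
  have "inj (\<lambda>i::'m. axis i (1::real))" by (auto intro!: injI simp: axis_eq_axis)
  then show ?thesis unfolding B by (simp add: prod.reindex inner_axis)
qed

lemma distr_lborel_to_ranked:
  "distr lborel borel (to_ranked :: real^'n::finite \<Rightarrow> real^('n ranked)) = lborel"
proof (rule lborel_eqI[symmetric])
  have meas_to_ranked: "to_ranked \<in> borel_measurable (borel :: (real^'n) measure)"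
    using linear_to_ranked
    by (intro borel_measurable_continuous_onI linear_continuous_on linear_conv_bounded_linear[THEN iffD1])
  fix l u :: "real^('n ranked)"
  assume le: "\<And>b. b \<in> Basis \<Longrightarrow> l \<bullet> b \<le> u \<bullet> b"
  have pre: "to_ranked -` box l u = box (of_ranked l) (of_ranked u)"
    by (auto simp: mem_box_cart to_ranked_def of_ranked_def)
      (metis Abs_ranked_inverse UNIV_I Rep_ranked_inverse)+
  have le2: "of_ranked l \<bullet> b \<le> of_ranked u \<bullet> b" if "b \<in> Basis" for b
  proof -
    from that obtain j where b: "b = axis j 1" unfolding Basis_vec_def by auto
    have "l \<bullet> axis (Abs_ranked j) 1 \<le> u \<bullet> axis (Abs_ranked j) 1" by (rule le) (auto simp: Basis_vec_def)
    then show ?thesis by (simp add: b inner_axis of_ranked_def)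
  qed
  have "emeasure (distr lborel borel to_ranked) (box l u) = emeasure lborel (to_ranked -` box l u)"
    using meas_to_ranked by (simp add: emeasure_distr)
  also have "\<dots> = (\<Prod>b\<in>Basis. (of_ranked u - of_ranked l) \<bullet> b)"
    unfolding pre using le2 by (simp add: emeasure_lborel_box)
  also have "(\<Prod>b\<in>Basis. (of_ranked u - of_ranked l) \<bullet> b) = (\<Prod>b\<in>Basis. (u - l) \<bullet> b)"
  proof -
    have "(\<Prod>j\<in>UNIV. (of_ranked u - of_ranked l) $ j) = (\<Prod>i\<in>UNIV. (u - l) $ i)"
      by (rule prod.reindex_bij_witness[where i = Rep_ranked and j = Abs_ranked])
        (auto simp: of_ranked_def Rep_ranked_inverse Abs_ranked_inverse)
    then show ?thesis by (simp add: prod_Basis_vec)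
  qed
  finally show "emeasure (distr lborel borel to_ranked) (box l u) = (\<Prod>b\<in>Basis. (u - l) \<bullet> b)" .
next
  show "sets (distr lborel borel (to_ranked :: real^'n \<Rightarrow> real^('n ranked))) = sets borel" by simp
qed

lemma integral_to_ranked_image:
  fixes h :: "real^('n::finite ranked) \<Rightarrow> real"
  assumes A: "compact A" and h: "continuous_on UNIV h"
  shows "integral (to_ranked ` A) h = integral A (\<lambda>x. h (to_ranked x))"
proof -
  have cont: "continuous_on UNIV to_ranked"
    using linear_to_ranked by (intro linear_continuous_on linear_conv_bounded_linear[THEN iffD1])
  have cA: "compact (to_ranked ` A)"
    using A cont by (intro compact_continuous_image) (auto intro: continuous_on_subset)
  have meas: "(\<lambda>y. indicator (to_ranked ` A) y * h y) \<in> borel_measurable borel"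
    using cA h by (intro borel_measurable_times borel_measurable_indicator borel_measurable_continuous_onI
        borel_closed compact_imp_closed)
  have "to_ranked x \<in> to_ranked ` A \<longleftrightarrow> x \<in> A" for x by (metis image_iff of_to_ranked)
  then have ind: "indicator (to_ranked ` A) (to_ranked x) = (indicator A x :: real)" for x
    by (simp add: indicator_def)
  have "(to_ranked :: real^'n \<Rightarrow> _) \<in> lborel \<rightarrow>\<^sub>M borel"
    using borel_measurable_continuous_onI[OF cont] by simp
  from integral_distr[OF this meas]
  have "integral (to_ranked ` A) h = (\<integral>x. indicator A x * h (to_ranked x) \<partial>lborel)"
    using cA h by (simp add: ind distr_lborel_to_ranked integral_compact_eq_lborel continuous_on_subset)
  also have "\<dots> = integral A (\<lambda>x. h (to_ranked x))"
    using A h cont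
    by (intro integral_compact_eq_lborel[symmetric] continuous_on_compose2[OF h])
      (auto intro: continuous_on_subset)
  finally show ?thesis .
qed

lemma integral_affine_image_wellorder:
  fixes L :: "real^'m::{finite,wellorder} \<Rightarrow> real^'m::_" and f :: "real^'m::_ \<Rightarrow> real"
  assumes lin: "linear L" and T: "compact T" and f: "continuous_on UNIV f"
  shows "integral ((\<lambda>x. a + L x) ` T) f = \<bar>det (matrix L)\<bar> * integral T (\<lambda>x. f (a + L x))"
proof (cases "inj L")
  case False
  then have "det (matrix L) = 0" using det_nz_iff_inj[OF lin] by blast
  moreover have "negligible ((+) a ` (L ` T))"
    by (intro negligible_translation negligible_linear_singular_image[OF lin False])
  moreover have "(+) a ` (L ` T) = (\<lambda>x. a + L x) ` T" by auto
  ultimately show ?thesis by (simp add: integral_negligible)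
next
  case True
  define g where "g = (\<lambda>x. a + L x)"
  define f1 where "f1 = (\<lambda>x. (\<chi> i. f x) :: real^1)"
  have cg: "continuous_on UNIV g"
    unfolding g_def
      by (intro continuous_intros linear_continuous_on linear_conv_bounded_linear[THEN iffD1, OF lin])
  have cf1: "continuous_on UNIV f1" unfolding f1_def using f by (intro continuous_on_vec_lambda) auto
  have der: "(g has_derivative L) (at x within T)" for x
    unfolding g_def using has_derivative_add_const[OF linear_imp_has_derivative[OF lin], of a]
    by (simp add: add.commute)
  have inj: "inj_on g T" using True unfolding g_def by (auto simp: inj_on_def dest: injD)
  have int_image: "f1 absolutely_integrable_on (g ` T)"
    using T cg cf1 by (intro absolutely_integrable_on_compact compact_continuous_image)
      (auto intro: continuous_on_subset)
  have int_T: "(\<lambda>x. f1 (g x)) absolutely_integrable_on T"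
    using T cg cf1 by (intro absolutely_integrable_on_compact continuous_on_compose2[OF cf1])
      (auto intro: continuous_on_subset)
  have "integral (g ` T) f1 = integral T (\<lambda>x. \<bar>det (matrix L)\<bar> *\<^sub>R f1 (g x))"
    using T int_image by (intro integral_change_of_variables[OF _ der inj])
      (auto simp: lmeasurable_compact fmeasurableD)
  then have "integral (g ` T) f1 $ 1 = \<bar>det (matrix L)\<bar> * integral T (\<lambda>x. f1 (g x)) $ 1" by simp
  then show ?thesis
    using int_image int_T
    by (simp add: integral_component_eq_cart[symmetric] absolutely_integrable_on_def f1_def g_def)
qed

lemma integral_affine_image:
  fixes L :: "real^'n::finite \<Rightarrow> real^'n"
  assumes lin: "linear L"
  shows "\<exists>c\<ge>0. \<forall>T a (f::real^'n \<Rightarrow> real). compact T \<longrightarrow> continuous_on UNIV f \<longrightarrow>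
           integral ((\<lambda>x. a + L x) ` T) f = c * integral T (\<lambda>x. f (a + L x))"
proof (intro exI conjI allI impI)
  define L' where "L' = (\<lambda>y. to_ranked (L (of_ranked y)))"
  have lin': "linear L'" unfolding L'_def
    using linear_compose[OF linear_compose[OF linear_of_ranked lin] linear_to_ranked] by (simp add: o_def)
  have cont: "continuous_on UNIV of_ranked" "continuous_on UNIV to_ranked" "continuous_on UNIV L"
    using linear_of_ranked linear_to_ranked lin
    by (auto intro!: linear_continuous_on linear_conv_bounded_linear[THEN iffD1])
  fix T :: "(real^'n) set" and a :: "real^'n" and f :: "real^'n \<Rightarrow> real"
  assume T: "compact T" and f: "continuous_on UNIV f"
  have cT: "compact ((\<lambda>x. a + L x) ` T)" "compact (to_ranked ` T)"
    using T cont by (auto intro!: compact_continuous_image continuous_intros intro: continuous_on_subset)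
  have cf: "continuous_on UNIV (\<lambda>y. f (of_ranked y))" "continuous_on UNIV (\<lambda>y. f (a + L (of_ranked y)))"
    using cont
      by (auto intro!: continuous_on_compose2[OF f] continuous_intros continuous_on_compose2[OF cont(3)])
  have "integral ((\<lambda>x. a + L x) ` T) f = integral (to_ranked ` (\<lambda>x. a + L x) ` T) (\<lambda>y. f (of_ranked y))"
    by (simp add: integral_to_ranked_image[OF cT(1) cf(1)])
  also have "to_ranked ` (\<lambda>x. a + L x) ` T = (\<lambda>y. to_ranked a + L' y) ` to_ranked ` T"
    unfolding L'_def by (auto simp: image_image linear_add[OF linear_to_ranked])
  also have "integral \<dots> (\<lambda>y. f (of_ranked y))
      = \<bar>det (matrix L')\<bar> * integral (to_ranked ` T) (\<lambda>y. f (of_ranked (to_ranked a + L' y)))"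
    by (rule integral_affine_image_wellorder[OF lin' cT(2) cf(1)])
  also have "integral (to_ranked ` T) (\<lambda>y. f (of_ranked (to_ranked a + L' y)))
      = integral T (\<lambda>x. f (a + L x))"
    unfolding L'_def by (simp add: linear_add[OF linear_of_ranked] integral_to_ranked_image[OF T cf(2)])
  finally show "integral ((\<lambda>x. a + L x) ` T) f = \<bar>det (matrix L')\<bar> * integral T (\<lambda>x. f (a + L x))" .
qed (simp)

section \<open>The Fourier transform of a simplex\<close>

lemma norm_exp_partial_sum_le:
  fixes z :: "'a::{real_normed_field,banach}"
  shows "norm (\<Sum>m<N. z ^ m / fact m) \<le> exp (norm z)"
proof -
  have "norm (\<Sum>m<N. z ^ m / fact m) \<le> (\<Sum>m<N. norm z ^ m /\<^sub>R fact m)"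
    by (rule order.trans[OF norm_sum])
      (simp add: norm_mult norm_inverse norm_power divide_inverse mult.commute)
  also have "\<dots> \<le> (\<Sum>m. norm z ^ m /\<^sub>R fact m)"
    using exp_converges[of "norm z"] by (intro sum_le_suminf) (auto simp: sums_iff)
  finally show ?thesis by (simp add: exp_def)
qed

lemma integral_exp_inner_sums:
  fixes A :: "'a::euclidean_space set" and y :: 'a and \<kappa> :: complex
  assumes A: "compact A"
  shows "(\<lambda>m. \<kappa> ^ m / fact m * of_real (integral A (\<lambda>x. (x \<bullet> y) ^ m)))
           sums integral A (\<lambda>x. exp (\<kappa> * of_real (x \<bullet> y)))"
proof -
  define f where "f = (\<lambda>N x. \<Sum>m<N. (\<kappa> * of_real (x \<bullet> y)) ^ m / fact m)"
  have coeff: "(\<kappa> * of_real (x \<bullet> y)) ^ m / fact m = \<kappa> ^ m / fact m * of_real ((x \<bullet> y) ^ m)" for x m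
    by (simp add: power_mult_distrib)
  have "bounded ((\<lambda>x. x \<bullet> y) ` A)"
    using A by (intro compact_imp_bounded compact_continuous_image continuous_intros)
  then obtain B where B: "\<And>x. x \<in> A \<Longrightarrow> \<bar>x \<bullet> y\<bar> \<le> B" by (auto simp: bounded_iff)
  have "(\<lambda>x. (x \<bullet> y) ^ m) integrable_on A" for m
    using absolutely_integrable_on_compact[OF A, of "\<lambda>x. (x \<bullet> y) ^ m"]
    by (simp add: absolutely_integrable_on_def continuous_intros)
  then have hf: "(f N has_integral (\<Sum>m<N. \<kappa> ^ m / fact m * of_real (integral A (\<lambda>x. (x \<bullet> y) ^ m)))) A" for N
    unfolding f_def coeff by (intro has_integral_sum has_integral_mult_right has_integral_of_real) auto
  have "(\<lambda>N. integral A (f N)) \<longlonglongrightarrow> integral A (\<lambda>x. exp (\<kappa> * of_real (x \<bullet> y)))"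
  proof (rule dominated_convergence(2))
    show "f N integrable_on A" for N using hf by blast
    show "(\<lambda>x. exp (norm \<kappa> * B)) integrable_on A"
      using A by (intro integrable_on_const lmeasurable_compact)
    show "norm (f N x) \<le> exp (norm \<kappa> * B)" if "x \<in> A" for N x
    proof -
      have "exp (norm (\<kappa> * of_real (x \<bullet> y))) \<le> exp (norm \<kappa> * B)"
        using B[OF that] by (simp add: norm_mult mult_left_mono)
      then show ?thesis unfolding f_def by (rule order.trans[OF norm_exp_partial_sum_le])
    qed
    show "(\<lambda>N. f N x) \<longlonglongrightarrow> exp (\<kappa> * of_real (x \<bullet> y))" for x
      using exp_converges[of "\<kappa> * of_real (x \<bullet> y)"]
      by (simp add: f_def sums_def scaleR_conv_of_real divide_inverse mult_ac)
  qed
  moreover have "integral A (f N) = (\<Sum>m<N. \<kappa> ^ m / fact m * of_real (integral A (\<lambda>x. (x \<bullet> y) ^ m)))" for N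
    using hf by (rule integral_unique)
  ultimately show ?thesis by (simp add: sums_def)
qed

lemma sum_inner_nth_Basis:
  fixes bs :: "'a::euclidean_space list" and u :: "nat \<Rightarrow> 'b::real_vector"
  assumes "distinct bs" "set bs = Basis" "i < length bs"
  shows "(\<Sum>j<length bs. (bs ! i \<bullet> bs ! j) *\<^sub>R u j) = u i"
proof -
  have "(bs ! i \<bullet> bs ! j) *\<^sub>R u j = (if j = i then u i else 0)" if "j < length bs" for j
    using assms that nth_mem[OF that] nth_mem[OF assms(3)] nth_eq_iff_index_eq[OF assms(1)]
    by (auto simp: inner_not_same_Basis)
  then have "(\<Sum>j<length bs. (bs ! i \<bullet> bs ! j) *\<^sub>R u j) = (\<Sum>j<length bs. if j = i then u i else 0)"
    by (intro sum.cong) auto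
  then show ?thesis using assms(3) by simp
qed

lemma convex_hull_eq_affine_image_std_simplex:
  fixes v :: "nat \<Rightarrow> 'a::euclidean_space" and bs :: "'a list"
  assumes bs: "distinct bs" "set bs = Basis"
  shows "convex hull (v ` {..DIM('a)})
       = (\<lambda>x. v 0 + (\<Sum>i<DIM('a). (x \<bullet> bs ! i) *\<^sub>R (v (Suc i) - v 0))) ` (convex hull (insert 0 Basis))"
proof -
  define M where "M = (\<lambda>x. \<Sum>i<DIM('a). (x \<bullet> bs ! i) *\<^sub>R (v (Suc i) - v 0))"
  have len: "length bs = DIM('a)" using distinct_card[OF bs(1)] bs(2) by simp
  have lin: "linear M" unfolding M_def
    by (intro linearI)
      (auto simp: inner_add_left scaleR_add_left sum.distrib scaleR_sum_right intro!: sum.cong)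
  have "M (bs ! i) = v (Suc i) - v 0" if "i < DIM('a)" for i
    using sum_inner_nth_Basis[OF bs, of i "\<lambda>i. v (Suc i) - v 0"] len that by (simp add: M_def)
  then have "(\<lambda>i. M (bs ! i)) ` {..<DIM('a)} = (\<lambda>i. v (Suc i) - v 0) ` {..<DIM('a)}"
    by (intro image_cong) auto
  moreover have "Basis = (\<lambda>i. bs ! i) ` {..<DIM('a)}" using len bs(2) by (auto simp: set_conv_nth)
  ultimately have "M ` Basis = (\<lambda>i. v (Suc i) - v 0) ` {..<DIM('a)}"
    by (metis image_image)
  moreover have "v ` {..DIM('a)} = insert (v 0) (v ` Suc ` {..<DIM('a)})"
  proof -
    have "{..DIM('a)} = insert 0 {1..DIM('a)}" by auto
    then show ?thesis by (simp add: image_Suc_lessThan)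
  qed
  ultimately have "(\<lambda>x. v 0 + x) ` M ` insert 0 Basis = v ` {..DIM('a)}"
    using linear_0[OF lin] by (simp add: image_image)
  moreover have "(\<lambda>x. v 0 + M x) ` (convex hull (insert 0 Basis))
      = (\<lambda>x. v 0 + x) ` M ` (convex hull (insert 0 Basis))"
    by (simp add: image_image)
  ultimately have "(\<lambda>x. v 0 + M x) ` (convex hull (insert 0 Basis)) = convex hull (v ` {..DIM('a)})"
    unfolding convex_hull_linear_image[OF lin] convex_hull_translation[symmetric] by simp
  then show ?thesis unfolding M_def by simp
qed

lemma integral_simplex_inner_power:
  fixes v :: "nat \<Rightarrow> real^'n" and y :: "real^'n"
  shows "integral (convex hull (v ` {..CARD('n)})) (\<lambda>x. (x \<bullet> y) ^ m)
       = fact CARD('n) * measure lebesgue (convex hull (v ` {..CARD('n)})) * fact m / fact (m + CARD('n))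
           * complete_homogeneous (map (\<lambda>j. v j \<bullet> y) [0..<Suc CARD('n)]) m"
proof -
  define d where "d = CARD('n)"
  define S where "S = convex hull (v ` {..d})"
  define Std where "Std = convex hull (insert 0 (Basis :: (real^'n) set))"
  obtain bs where bs: "distinct bs" "set bs = (Basis :: (real^'n) set)"
    using finite_distinct_list[OF finite_Basis] by metis
  have len: "length bs = d" using distinct_card[OF bs(1)] bs(2) by (simp add: d_def)
  define M where "M = (\<lambda>x::real^'n. \<Sum>i<d. (x \<bullet> bs ! i) *\<^sub>R (v (Suc i) - v 0))"
  have lin: "linear M" unfolding M_def
    by (intro linearI)
      (auto simp: inner_add_left scaleR_add_left sum.distrib scaleR_sum_right intro!: sum.cong)
  have M_nth: "M (bs ! i) = v (Suc i) - v 0" if "i < d" for i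
    using sum_inner_nth_Basis[OF bs, of i "\<lambda>i. v (Suc i) - v 0"] len that by (simp add: M_def)
  have S_eq: "S = (\<lambda>x. v 0 + M x) ` Std"
    using convex_hull_eq_affine_image_std_simplex[OF bs, of v] by (simp add: S_def Std_def M_def d_def)
  have Std: "compact Std" unfolding Std_def by (intro finite_imp_compact_convex_hull) auto
  then have S: "compact S" unfolding S_def by (intro finite_imp_compact_convex_hull) auto
  obtain c :: real where c: "\<And>f. continuous_on UNIV f \<Longrightarrow> integral S f = c * integral Std (\<lambda>x. f (v 0 + M x))"
    using integral_affine_image[OF lin] Std unfolding S_eq by blast
  have "measure lebesgue S = c * measure lebesgue Std"
    using c[of "\<lambda>_. 1"] by (simp add: lmeasure_integral lmeasurable_compact S Std)
  also have "measure lebesgue Std = 1 / fact d"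
    using Std content_std_simplex[where 'a="real^'n"]
    by (simp add: measure_completion compact_imp_closed Std_def d_def)
  finally have c_eq: "c = fact d * measure lebesgue S" by simp
  define \<omega> where "\<omega> = (\<lambda>b. (v 0 + M b) \<bullet> y)"
  have "(v 0 + M x) \<bullet> y = v 0 \<bullet> y + (\<Sum>b\<in>Basis. (x \<bullet> b) * (\<omega> b - v 0 \<bullet> y))" for x
  proof -
    have "M x = (\<Sum>b\<in>Basis. (x \<bullet> b) *\<^sub>R M b)"
      by (subst euclidean_representation[symmetric, of x])
        (simp add: linear_sum[OF lin] linear_scale[OF lin])
    then show ?thesis by (simp add: \<omega>_def inner_add_left inner_sum_left)
  qed
  then have "integral S (\<lambda>x. (x \<bullet> y) ^ m)
      = c * (\<integral>x. indicator Std x * (v 0 \<bullet> y + (\<Sum>b\<in>Basis. (x \<bullet> b) * (\<omega> b - v 0 \<bullet> y))) ^ m \<partial>lborel)"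
    using Std by (simp add: c integral_compact_eq_lborel continuous_intros)
  also have "\<dots> = c * (fact m * complete_homogeneous (v 0 \<bullet> y # map \<omega> bs) m / fact (m + d))"
    unfolding Std_def using integral_std_simplex_moment[OF bs] by (simp add: d_def)
  also have "map \<omega> bs = map (\<lambda>i. v (Suc i) \<bullet> y) [0..<d]"
    by (rule nth_equalityI) (simp_all add: len \<omega>_def M_nth)
  finally show ?thesis
    unfolding c_eq S_def d_def by (simp add: map_upt_Suc del: upt_Suc)
qed

lemma fourier_char_simplex_sums:
  fixes v :: "nat \<Rightarrow> real^'n" and y :: "real^'n"
  shows "(\<lambda>m. (- (2 * of_real pi * \<i>)) ^ m
              * of_real (fact CARD('n) * measure lebesgue (convex hull (v ` {..CARD('n)}))
                         * complete_homogeneous (map (\<lambda>j. v j \<bullet> y) [0..<Suc CARD('n)]) m / fact (m + CARD('n))))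
         sums fourier_char (convex hull (v ` {..CARD('n)})) y"
proof -
  define S where "S = convex hull (v ` {..CARD('n)})"
  define \<kappa> :: complex where "\<kappa> = - (2 * of_real pi * \<i>)"
  define H where "H = complete_homogeneous (map (\<lambda>j. v j \<bullet> y) [0..<Suc CARD('n)])"
  have "compact S" unfolding S_def by (intro finite_imp_compact_convex_hull) auto
  then have "(\<lambda>m. \<kappa> ^ m / fact m * of_real (integral S (\<lambda>x. (x \<bullet> y) ^ m))) sums fourier_char S y"
    unfolding fourier_char_def \<kappa>_def by (rule integral_exp_inner_sums)
  moreover have "\<kappa> ^ m / fact m * of_real (integral S (\<lambda>x. (x \<bullet> y) ^ m))
      = \<kappa> ^ m * of_real (fact CARD('n) * measure lebesgue S * H m / fact (m + CARD('n)))" for m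
    unfolding S_def integral_simplex_inner_power H_def by (simp add: of_real_mult of_real_divide)
  ultimately show ?thesis by (simp add: S_def \<kappa>_def H_def)
qed

lemma fourier_char_scaled_simplex_sums:
  fixes v :: "nat \<Rightarrow> real^'n" and y :: "real^'n"
  assumes "t > 0"
  shows "(\<lambda>k. (- (2 * of_real pi * \<i>)) ^ k
              * of_real (fact CARD('n) * t ^ (k + CARD('n)) * measure lebesgue (convex hull (v ` {..CARD('n)}))
                         * complete_homogeneous (map (\<lambda>j. v j \<bullet> y) [0..<Suc CARD('n)]) k / fact (k + CARD('n))))
         sums fourier_char ((\<lambda>x. t *\<^sub>R x) ` (convex hull (v ` {..CARD('n)}))) y"
proof -
  define S where "S = convex hull (v ` {..CARD('n)})"
  define H where "H = complete_homogeneous (map (\<lambda>j. v j \<bullet> y) [0..<Suc CARD('n)])"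
  have hull: "convex hull ((\<lambda>j. t *\<^sub>R v j) ` {..CARD('n)}) = (\<lambda>x. t *\<^sub>R x) ` S"
    using convex_hull_scaling[of t "v ` {..CARD('n)}"] by (simp add: image_image S_def)
  have measure: "measure lebesgue ((\<lambda>x. t *\<^sub>R x) ` S) = t ^ CARD('n) * measure lebesgue S"
    using measure_lebesgue_affine[of t 0 S] assms by simp
  have moments: "complete_homogeneous (map (\<lambda>j. (t *\<^sub>R v j) \<bullet> y) [0..<Suc CARD('n)]) k = t ^ k * H k" for k
    using complete_homogeneous_scale[of t "map (\<lambda>j. v j \<bullet> y) [0..<Suc CARD('n)]" k]
    by (simp add: H_def o_def)
  have coefficient: "fact CARD('n) * (t ^ CARD('n) * measure lebesgue S) * (t ^ k * H k)
      = fact CARD('n) * t ^ (k + CARD('n)) * measure lebesgue S * H k" for k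
    by (simp add: power_add mult_ac)
  show ?thesis
    using fourier_char_simplex_sums[of "\<lambda>j. t *\<^sub>R v j" y, unfolded hull measure moments coefficient]
    unfolding S_def H_def .

qed

lemma contour_integral_exp_over_simplex_sums:
  fixes w :: "nat \<Rightarrow> real"
  assumes "\<forall>j\<le>d. \<bar>w j\<bar> < R"
  shows "(\<lambda>k. 2 * pi * \<i> * of_real (complete_homogeneous (map w [0..<Suc d]) k) * c ^ (k + d) / fact (k + d))
           sums contour_integral (circlepath 0 R) (\<lambda>z. exp (c * z) / (\<Prod>j\<le>d. z - of_real (w j)))"
proof -
  have prod_eq: "(\<Prod>a\<leftarrow>map of_real (map w [0..<Suc d]). z - a) = (\<Prod>j\<le>d. z - of_real (w j))"
    for z :: complex
    by (simp add: prod.distinct_set_conv_list[symmetric] atLeast0LessThan lessThan_Suc_atMost del: upt_Suc)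
  show ?thesis
    using contour_integral_exp_over_prod_sums[of "map of_real (map w [0..<Suc d])" d R c,
        unfolded complete_homogeneous_of_real prod_eq] assms
    by simp

qed

lemma fourier_contour_coefficient:
  fixes a t l h f :: "'a::field_char_0"
  assumes "a \<noteq> 0"
  shows "(-1) ^ d * fact d / a ^ (d + 1) * l * (a * h * (- a * t) ^ (k + d) / f)
       = (- a) ^ k * (fact d * t ^ (k + d) * l * h / f)"
proof -
  have "(- a * t) ^ (k + d) = (- a) ^ k * t ^ (k + d) * ((-1) ^ d * a ^ d)"
    by (simp only: power_mult_distrib power_add power_minus[of a d] mult_ac)
  moreover have "(-1 :: 'a) ^ d * (-1) ^ d = 1" by (simp add: power_mult_distrib[symmetric])
  moreover have "a * a ^ d / a ^ (d + 1) = 1" using assms by simp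
  ultimately show ?thesis using assms by (simp add: mult_ac)
qed

theorem theorem3:
  fixes v :: "nat \<Rightarrow> real^'n" and S :: "(real^'n) set"
    and t R :: real and y :: "real^'n"
  assumes inj: "inj_on v {..CARD('n)}"
    and indep: "\<not> affine_dependent (v ` {..CARD('n)})"
    and S_def: "S = convex hull (v ` {..CARD('n)})"
    and t_pos: "t > 0"
    and R_gt: "\<forall>j\<le>CARD('n). \<bar>v j \<bullet> y\<bar> < R"
  shows "fourier_char ((\<lambda>x. t *\<^sub>R x) ` S) y =
    ((-1) ^ CARD('n) * of_nat (fact (CARD('n))) / (2 * of_real pi * \<i>) ^ (CARD('n) + 1))
    * of_real (measure lebesgue S)
    * contour_integral (circlepath 0 R)
        (\<lambda>z. exp (- (2 * of_real pi * \<i>) * z * of_real t)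
              / (\<Prod>j\<le>CARD('n). (z - of_real (v j \<bullet> y))))"
proof -
  define d where "d = CARD('n)"
  define a :: complex where "a = 2 * of_real pi * \<i>"
  define H where "H = complete_homogeneous (map (\<lambda>j. v j \<bullet> y) [0..<Suc d])"
  define K where "K = (-1) ^ d * of_nat (fact d) / a ^ (d + 1) * of_real (measure lebesgue S)"
  have lhs: "(\<lambda>k. (- a) ^ k * of_real (fact d * t ^ (k + d) * measure lebesgue S * H k / fact (k + d)))
      sums fourier_char ((\<lambda>x. t *\<^sub>R x) ` S) y"
    using fourier_char_scaled_simplex_sums[OF t_pos, of v y] by (simp add: S_def a_def d_def H_def)
  define CI where "CI = contour_integral (circlepath 0 R)
                          (\<lambda>z. exp (- a * of_real t * z) / (\<Prod>j\<le>d. z - of_real (v j \<bullet> y)))"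
  have "(\<lambda>k. a * of_real (H k) * (- a * of_real t) ^ (k + d) / fact (k + d)) sums CI"
    using contour_integral_exp_over_simplex_sums[of d "\<lambda>j. v j \<bullet> y" R "- a * of_real t"] R_gt
    by (simp add: H_def a_def d_def CI_def)
  then have "(\<lambda>k. K * (a * of_real (H k) * (- a * of_real t) ^ (k + d) / fact (k + d))) sums (K * CI)"
    by (rule sums_mult)
  moreover have "K * (a * of_real (H k) * (- a * of_real t) ^ (k + d) / fact (k + d))
      = (- a) ^ k * of_real (fact d * t ^ (k + d) * measure lebesgue S * H k / fact (k + d))" for k
    using fourier_contour_coefficient[of a d] by (simp add: K_def a_def)
  ultimately show ?thesis
    using sums_unique2[OF lhs] by (simp add: K_def a_def d_def CI_def mult_ac)
qed

end
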